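(* Fix $\mathcal{D}_n$ and $\hat\theta$ and assume $\tilde J$ is invertible. Let $r\in\{1,\dots,n-1\}$. Define $h_i^{mV}=|y_i^p-\hat y^s(x_i,\hat\theta)|\,(g_i^T\tilde J^{-2}g_i)^{1/2}$, $i=1,\dots,n$, let $h^{mV}_{(1)}\le\dots\le h^{mV}_{(n)}$ be their order statistics, set $h^{mV}_{(n+1)}=\infty$, and assume $h^{mV}_{(n-r)}>0$. Let $k=\min\{s: 0\le s\le r,\ (r-s)h^{mV}_{(n-s)}<\sum_{i=1}^{n-s}h^{mV}_{(i)}\}$ and $M=\frac{1}{r-k}\sum_{i=1}^{n-k}h^{mV}_{(i)}$. Then the probabilities $$\pi_i^{mV}=r\frac{h_i^{mV}\wedge M}{\sum_{j=1}^n(h_j^{mV}\wedge M)},\quad i=1,\dots,n,$$ minimize $\mathrm{tr}(\tilde\Sigma)=\mathrm{tr}(\tilde J^{-1}\tilde V\tilde J^{-1})$ over all $(\pi_1,\dots,\pi_n)$ satisfying $\sum_{i=1}^n\pi_i=r$ and $0<\pi_i\le1$ (i.e. Poisson subsampling with these probabilities is mV-optimal, minimizing the asymptotic MSE of $\tilde\theta$ given $\mathcal{D}_n$).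
   Context: Physical data $\mathcal{D}_n=\{(x_i,y_i^p)\}_{i=1}^n$ with $x_i\in\Omega\subset\mathbb{R}^d$; $\hat y^s(x,\theta)$ is a surrogate of a computer model, differentiable in $\theta\in\Theta\subset\mathbb{R}^q$; $\hat\theta=\arg\min_{\theta\in\Theta}\frac1n\sum_{i=1}^n[y_i^p-\hat y^s(x_i,\theta)]^2$. $g_i=\nabla_\theta\hat y^s(x_i,\hat\theta)$ (column vector). $\tilde J=\frac1n\sum_{i=1}^n\frac{\partial^2[y_i^p-\hat y^s(x_i,\hat\theta)]^2}{\partial\theta\partial\theta^T}$. For subsampling probabilities $\pi_i$, $\tilde V=\frac{4}{n^2}\sum_{i=1}^n\frac{1-\pi_i}{\pi_i}[y_i^p-\hat y^s(x_i,\hat\theta)]^2g_ig_i^T$ and $\tilde\Sigma=\tilde J^{-1}\tilde V\tilde J^{-1}$ (the conditional asymptotic covariance of the Poisson-subsample IPWLS estimator $\tilde\theta=\arg\min_\theta\frac1n\sum_i\frac{a_i}{\pi_i}[y_i^p-\hat y^s(x_i,\theta)]^2$, $a_i\sim\mathrm{Bernoulli}(\pi_i)$ independent). $a\wedge b=\min(a,b)$. *)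

theory Defs
  imports "HOL-Analysis.Analysis"
begin

text \<open>Data are indexed by i in {1..n}. e i is the residual y_i^p - yhat^s(x_i, thetahat),
  g i the gradient vector, J the matrix tilde J.\<close>

definition outer :: "real^'q \<Rightarrow> real^'q^'q" where
  "outer v = (\<chi> a b. v $ a * v $ b)"

definition Vtil :: "nat \<Rightarrow> (nat \<Rightarrow> real) \<Rightarrow> (nat \<Rightarrow> real^'q) \<Rightarrow> (nat \<Rightarrow> real) \<Rightarrow> real^'q^'q" where
  "Vtil n e g p = (4 / (real n)^2) *\<^sub>R
     (\<Sum>i\<in>{1..n}. (((1 - p i) / p i) * (e i)^2) *\<^sub>R outer (g i))"

definition Sigmatil :: "nat \<Rightarrow> (nat \<Rightarrow> real) \<Rightarrow> (nat \<Rightarrow> real^'q) \<Rightarrow> real^'q^'q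
    \<Rightarrow> (nat \<Rightarrow> real) \<Rightarrow> real^'q^'q" where
  "Sigmatil n e g J p = matrix_inv J ** Vtil n e g p ** matrix_inv J"

definition hmv :: "(nat \<Rightarrow> real) \<Rightarrow> (nat \<Rightarrow> real^'q) \<Rightarrow> real^'q^'q \<Rightarrow> nat \<Rightarrow> real" where
  "hmv e g J i = \<bar>e i\<bar> * sqrt (g i \<bullet> ((matrix_inv J ** matrix_inv J) *v g i))"

definition ostat :: "(nat \<Rightarrow> real) \<Rightarrow> nat \<Rightarrow> nat \<Rightarrow> real" where
  "ostat h n j = sort (map h [1..<n+1]) ! (j - 1)"

definition kidx :: "(nat \<Rightarrow> real) \<Rightarrow> nat \<Rightarrow> nat \<Rightarrow> nat" where
  "kidx h n r = (LEAST s. s \<le> r \<and>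
      real (r - s) * ostat h n (n - s) < (\<Sum>i\<in>{1..n-s}. ostat h n i))"

definition Mthr :: "(nat \<Rightarrow> real) \<Rightarrow> nat \<Rightarrow> nat \<Rightarrow> real" where
  "Mthr h n r = (1 / real (r - kidx h n r)) * (\<Sum>i\<in>{1..n - kidx h n r}. ostat h n i)"

definition pimv :: "(nat \<Rightarrow> real) \<Rightarrow> nat \<Rightarrow> nat \<Rightarrow> nat \<Rightarrow> real" where
  "pimv h n r i = real r * (min (h i) (Mthr h n r) / (\<Sum>j\<in>{1..n}. min (h j) (Mthr h n r)))"

end

theory Submission
  imports Defs
begin

text \<open>By cyclicity of the trace, \<open>tr \<Sigma>\<close> equals \<open>(4/n\<^sup>2) \<Sum>i. h\<^sub>i\<^sup>2 (1 - \<pi>\<^sub>i) / \<pi>\<^sub>i\<close>, where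
  \<open>g\<^sub>i\<^sup>T J\<^sup>-\<^sup>2 g\<^sub>i = |J\<^sup>-\<^sup>1 g\<^sub>i|\<^sup>2\<close> because \<open>J\<close>, being the derivative of a gradient, is symmetric.
  On \<open>\<Sum>i. \<pi>\<^sub>i = r\<close> this objective differs from the Lagrangian \<open>\<Sum>i. h\<^sub>i\<^sup>2 (1 - \<pi>\<^sub>i) / \<pi>\<^sub>i + M\<^sup>2 \<pi>\<^sub>i\<close>
  by a constant, and each summand is minimised over \<open>0 < \<pi>\<^sub>i \<le> 1\<close> at \<open>min h\<^sub>i M / M\<close>. The
  threshold \<open>M\<close> read off the order statistics lies between \<open>h\<^sub>(\<^sub>n\<^sub>-\<^sub>k\<^sub>)\<close> and \<open>h\<^sub>(\<^sub>n\<^sub>-\<^sub>k\<^sub>+\<^sub>1\<^sub>)\<close>, which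
  makes these capped weights sum to exactly \<open>r\<close>.\<close>

section \<open>Symmetry of the Hessian\<close>

lemma has_real_derivative_along_line:
  fixes L :: "'a::real_inner \<Rightarrow> real"
  assumes "(L has_derivative (\<lambda>v. G (a + s *\<^sub>R u) \<bullet> v)) (at (a + s *\<^sub>R u))"
  shows "((\<lambda>s. L (a + s *\<^sub>R u)) has_real_derivative G (a + s *\<^sub>R u) \<bullet> u) (at s)"
proof -
  have "((\<lambda>s. a + s *\<^sub>R u) has_derivative (\<lambda>t. t *\<^sub>R u)) (at s)"
    by (auto intro!: derivative_eq_intros)
  from has_derivative_compose[OF this assms]
  show ?thesis
    unfolding has_field_derivative_def by (simp add: o_def mult.commute[of _ "G _ \<bullet> u"])
qed

lemma second_difference_mean_value:
  fixes L :: "'a::real_inner \<Rightarrow> real"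
  assumes dL: "\<forall>y\<in>S. (L has_derivative (\<lambda>v. G y \<bullet> v)) (at y)" and t: "t > 0"
    and in_S: "\<And>s. 0 \<le> s \<Longrightarrow> s \<le> t \<Longrightarrow> x0 + s *\<^sub>R u \<in> S \<and> x0 + t *\<^sub>R v + s *\<^sub>R u \<in> S"
  obtains \<xi> where "0 < \<xi>" "\<xi> < t"
    "L (x0 + t *\<^sub>R u + t *\<^sub>R v) - L (x0 + t *\<^sub>R u) - L (x0 + t *\<^sub>R v) + L x0
       = t * ((G (x0 + t *\<^sub>R v + \<xi> *\<^sub>R u) - G (x0 + \<xi> *\<^sub>R u)) \<bullet> u)"
proof -
  define \<phi> where "\<phi> s = L (x0 + t *\<^sub>R v + s *\<^sub>R u) - L (x0 + s *\<^sub>R u)" for s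
  define \<phi>' where "\<phi>' s = (G (x0 + t *\<^sub>R v + s *\<^sub>R u) - G (x0 + s *\<^sub>R u)) \<bullet> u" for s
  have "(\<phi> has_real_derivative \<phi>' s) (at s)" if "0 \<le> s" "s \<le> t" for s
    unfolding \<phi>_def \<phi>'_def inner_diff_left using in_S[OF that] dL
    by (intro DERIV_diff has_real_derivative_along_line) (auto simp: add.assoc)
  then obtain \<xi> where "0 < \<xi>" "\<xi> < t" "\<phi> t - \<phi> 0 = t * \<phi>' \<xi>"
    using MVT2[of 0 t \<phi> \<phi>'] t by auto
  then show ?thesis
    using that[of \<xi>] unfolding \<phi>_def \<phi>'_def by (simp add: algebra_simps)
qed

lemma second_difference_estimate:
  fixes L :: "'a::real_inner \<Rightarrow> real"
  assumes dL: "\<forall>y\<in>S. (L has_derivative (\<lambda>v. G y \<bullet> v)) (at y)"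
    and ball: "ball x0 \<rho> \<subseteq> S"
    and dG: "\<forall>y. norm y < d \<longrightarrow> norm (G (x0 + y) - G x0 - H y) \<le> \<epsilon> * norm y"
    and H: "linear H" and \<epsilon>: "\<epsilon> \<ge> 0" and t: "t > 0"
    and small: "t * (norm u + norm v) < \<rho>" "t * (norm u + norm v) < d"
  shows "\<bar>L (x0 + t *\<^sub>R u + t *\<^sub>R v) - L (x0 + t *\<^sub>R u) - L (x0 + t *\<^sub>R v) + L x0
           - t\<^sup>2 * (H v \<bullet> u)\<bar> \<le> 2 * \<epsilon> * t\<^sup>2 * (norm u + norm v) * norm u"
proof -
  define R where "R = t * (norm u + norm v)"
  have short: "norm (t *\<^sub>R v + s *\<^sub>R u) \<le> R" "norm (s *\<^sub>R u) \<le> R" if "0 \<le> s" "s \<le> t" for s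
  proof -
    have "norm (t *\<^sub>R v + s *\<^sub>R u) \<le> t * norm v + s * norm u"
      using norm_triangle_ineq[of "t *\<^sub>R v" "s *\<^sub>R u"] that t by simp
    also have "\<dots> \<le> R"
      unfolding R_def using that by (simp add: distrib_left mult_right_mono)
    finally show "norm (t *\<^sub>R v + s *\<^sub>R u) \<le> R" .
    show "norm (s *\<^sub>R u) \<le> R"
      unfolding R_def using that by (simp add: distrib_left mult_right_mono add_increasing2)
  qed
  have in_S: "x0 + y \<in> S" if "norm y \<le> R" for y
    using ball that small(1) by (auto simp: dist_norm R_def)
  have "x0 + s *\<^sub>R u \<in> S \<and> x0 + t *\<^sub>R v + s *\<^sub>R u \<in> S" if "0 \<le> s" "s \<le> t" for s
    using in_S short[OF that] by (simp add: add.assoc)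
  then obtain \<xi> where \<xi>: "0 < \<xi>" "\<xi> < t"
    "L (x0 + t *\<^sub>R u + t *\<^sub>R v) - L (x0 + t *\<^sub>R u) - L (x0 + t *\<^sub>R v) + L x0
       = t * ((G (x0 + t *\<^sub>R v + \<xi> *\<^sub>R u) - G (x0 + \<xi> *\<^sub>R u)) \<bullet> u)"
    using second_difference_mean_value[OF dL t] by blast
  define E where "E y = G (x0 + y) - G x0 - H y" for y
  have E: "norm (E y) \<le> \<epsilon> * R" if "norm y \<le> R" for y
    using dG that small(2) \<epsilon> unfolding E_def R_def
    by (meson dual_order.trans le_less_trans mult_left_mono)
  define y1 where "y1 = t *\<^sub>R v + \<xi> *\<^sub>R u"
  define y2 where "y2 = \<xi> *\<^sub>R u"
  have "(G (x0 + t *\<^sub>R v + \<xi> *\<^sub>R u) - G (x0 + \<xi> *\<^sub>R u)) \<bullet> u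
      = (H y1 + E y1 - H y2 - E y2) \<bullet> u"
    unfolding E_def y1_def y2_def by (simp add: add.assoc)
  also have "\<dots> = t * (H v \<bullet> u) + (E y1 - E y2) \<bullet> u"
    unfolding y1_def y2_def
    by (simp add: linear_add[OF H] linear_cmul[OF H] inner_add_left inner_diff_left)
  finally have grad_diff: "(G (x0 + t *\<^sub>R v + \<xi> *\<^sub>R u) - G (x0 + \<xi> *\<^sub>R u)) \<bullet> u
      = t * (H v \<bullet> u) + (E y1 - E y2) \<bullet> u" .
  have expand: "L (x0 + t *\<^sub>R u + t *\<^sub>R v) - L (x0 + t *\<^sub>R u) - L (x0 + t *\<^sub>R v) + L x0
        - t\<^sup>2 * (H v \<bullet> u) = t * ((E y1 - E y2) \<bullet> u)"
    unfolding \<xi>(3) grad_diff by (simp add: power2_eq_square algebra_simps)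
  have E12: "norm (E y1) \<le> \<epsilon> * R" "norm (E y2) \<le> \<epsilon> * R"
    using E short[of \<xi>] \<xi> unfolding y1_def y2_def by auto
  have "\<bar>(E y1 - E y2) \<bullet> u\<bar> \<le> norm (E y1 - E y2) * norm u"
    by (rule Cauchy_Schwarz_ineq2)
  also have "\<dots> \<le> (norm (E y1) + norm (E y2)) * norm u"
    by (intro mult_right_mono norm_triangle_ineq4) simp
  also have "\<dots> \<le> 2 * \<epsilon> * R * norm u"
    using E12 by (intro mult_right_mono) auto
  finally have "\<bar>t * ((E y1 - E y2) \<bullet> u)\<bar> \<le> t * (2 * \<epsilon> * R * norm u)"
    using t by (simp add: abs_mult mult_left_mono)
  then show ?thesis
    unfolding expand by (simp add: R_def power2_eq_square algebra_simps)
qed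

text \<open>Both orders of the second difference approximate the same quantity to within \<open>o(t\<^sup>2)\<close>;
  only differentiability of the gradient at the single point \<open>x0\<close> is needed.\<close>

lemma derivative_of_gradient_symmetric:
  fixes L :: "'a::real_inner \<Rightarrow> real"
  assumes S: "open S" "x0 \<in> S"
    and dL: "\<forall>y\<in>S. (L has_derivative (\<lambda>v. G y \<bullet> v)) (at y)"
    and dG: "(G has_derivative H) (at x0)"
  shows "H v \<bullet> u = H u \<bullet> v"
proof (rule ccontr)
  assume "H v \<bullet> u \<noteq> H u \<bullet> v"
  then have gap: "\<bar>H v \<bullet> u - H u \<bullet> v\<bar> > 0" by simp
  have H: "linear H" using dG has_derivative_linear by blast
  obtain \<rho> where \<rho>: "\<rho> > 0" "ball x0 \<rho> \<subseteq> S" using S openE by blast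
  define K where "K = norm u + norm v + 1"
  have K: "K > 0" "norm u + norm v < K" "norm v + norm u < K" "norm u \<le> K" "norm v \<le> K"
    unfolding K_def by (auto simp: add_nonneg_pos)
  define \<epsilon> where "\<epsilon> = \<bar>H v \<bullet> u - H u \<bullet> v\<bar> / (8 * K\<^sup>2)"
  have \<epsilon>: "\<epsilon> > 0" using gap K unfolding \<epsilon>_def by auto
  obtain d where d: "d > 0"
    "\<forall>y. norm (y - x0) < d \<longrightarrow> norm (G y - G x0 - H (y - x0)) \<le> \<epsilon> * norm (y - x0)"
    using dG \<epsilon> unfolding has_derivative_at_alt by blast
  have err: "\<forall>y. norm y < d \<longrightarrow> norm (G (x0 + y) - G x0 - H y) \<le> \<epsilon> * norm y"
    using d(2) by (metis add_diff_cancel_left')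
  define t where "t = min \<rho> d / (2 * K)"
  have t: "t > 0" "t * K < \<rho>" "t * K < d" using \<rho> d K unfolding t_def by auto
  have small: "t * (norm u + norm v) < \<rho>" "t * (norm u + norm v) < d"
    "t * (norm v + norm u) < \<rho>" "t * (norm v + norm u) < d"
    using t K by (smt (verit) mult_strict_left_mono)+
  define D where "D = L (x0 + t *\<^sub>R u + t *\<^sub>R v) - L (x0 + t *\<^sub>R u) - L (x0 + t *\<^sub>R v) + L x0"
  have bound: "2 * \<epsilon> * t\<^sup>2 * (norm a + norm b) * norm a \<le> 2 * \<epsilon> * t\<^sup>2 * K * K"
    if "norm a + norm b < K" "norm a \<le> K" for a b
    using that \<epsilon> K(1) by (intro mult_mono) auto
  have close_vu: "\<bar>D - t\<^sup>2 * (H v \<bullet> u)\<bar> \<le> 2 * \<epsilon> * t\<^sup>2 * K * K"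
    using order_trans[OF second_difference_estimate[OF dL \<rho>(2) err H _ t(1) small(1,2)]
        bound[OF K(2,4)]] \<epsilon> unfolding D_def by simp
  have "D = L (x0 + t *\<^sub>R v + t *\<^sub>R u) - L (x0 + t *\<^sub>R v) - L (x0 + t *\<^sub>R u) + L x0"
    unfolding D_def by (simp add: algebra_simps)
  then have close_uv: "\<bar>D - t\<^sup>2 * (H u \<bullet> v)\<bar> \<le> 2 * \<epsilon> * t\<^sup>2 * K * K"
    using order_trans[OF second_difference_estimate[OF dL \<rho>(2) err H _ t(1) small(3,4)]
        bound[OF K(3,5)]] \<epsilon> by simp
  have "t\<^sup>2 * \<bar>H v \<bullet> u - H u \<bullet> v\<bar> = \<bar>(D - t\<^sup>2 * (H u \<bullet> v)) - (D - t\<^sup>2 * (H v \<bullet> u))\<bar>"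
    by (simp add: abs_mult right_diff_distrib[symmetric])
  also have "\<dots> \<le> 4 * \<epsilon> * t\<^sup>2 * K * K"
    using close_vu close_uv abs_triangle_ineq4[of "D - t\<^sup>2 * (H u \<bullet> v)" "D - t\<^sup>2 * (H v \<bullet> u)"] by linarith
  also have "\<dots> = t\<^sup>2 * (\<bar>H v \<bullet> u - H u \<bullet> v\<bar> / 2)"
    using K unfolding \<epsilon>_def by (simp add: power2_eq_square field_simps)
  finally show False using t(1) gap by simp
qed

section \<open>The trace of the asymptotic covariance\<close>

lemma trace_matrix_mult: "trace (A ** B) = (\<Sum>k\<in>UNIV. \<Sum>j\<in>UNIV. A$k$j * B$j$k)"
  by (simp add: trace_def matrix_matrix_mult_def)

lemma trace_outer_mult: "trace (outer v ** B) = v \<bullet> (B *v v)"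
  unfolding trace_matrix_mult outer_def matrix_vector_mult_def inner_vec_def
  by (simp add: sum_distrib_left, subst sum.swap, simp add: mult_ac)

lemma trace_scaleR_sum_mult:
  "finite I \<Longrightarrow> trace ((c *\<^sub>R (\<Sum>i\<in>I. w i *\<^sub>R A i)) ** B) = c * (\<Sum>i\<in>I. w i * trace (A i ** B))"
  unfolding trace_matrix_mult
  by (simp add: sum_component sum_distrib_left sum_distrib_right mult_ac sum.swap[of _ I])

lemma matrix_inv_self_adjoint:
  fixes J :: "real^'q^'q"
  assumes "invertible J" and J_sym: "\<And>u v. (J *v v) \<bullet> u = (J *v u) \<bullet> v"
  shows "(matrix_inv J *v x) \<bullet> y = x \<bullet> (matrix_inv J *v y)"
proof -
  let ?A = "matrix_inv J"
  have "J ** ?A = mat 1"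
    using assms(1) unfolding matrix_inv_def invertible_def by (rule someI2_ex) blast
  then have JA: "J *v (?A *v z) = z" for z
    by (simp add: matrix_vector_mul_assoc)
  have "(?A *v x) \<bullet> y = (?A *v x) \<bullet> (J *v (?A *v y))" by (simp add: JA)
  also have "\<dots> = (J *v (?A *v x)) \<bullet> (?A *v y)" using J_sym by (simp add: inner_commute)
  finally show ?thesis by (simp add: JA)
qed

lemma inner_matrix_inv_square:
  fixes J :: "real^'q^'q"
  assumes "invertible J" "\<And>u v. (J *v v) \<bullet> u = (J *v u) \<bullet> v"
  shows "x \<bullet> ((matrix_inv J ** matrix_inv J) *v x) = (norm (matrix_inv J *v x))\<^sup>2"
  using matrix_inv_self_adjoint[OF assms]
  by (simp add: matrix_vector_mul_assoc[symmetric] power2_norm_eq_inner)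

lemma hmv_eq_norm:
  fixes J :: "real^'q^'q"
  assumes "invertible J" "\<And>u v. (J *v v) \<bullet> u = (J *v u) \<bullet> v"
  shows "hmv e g J i = \<bar>e i\<bar> * norm (matrix_inv J *v g i)"
  unfolding hmv_def inner_matrix_inv_square[OF assms] by simp

lemma trace_Sigmatil:
  fixes J :: "real^'q^'q"
  assumes "invertible J" "\<And>u v. (J *v v) \<bullet> u = (J *v u) \<bullet> v"
  shows "trace (Sigmatil n e g J p) = 4 / (real n)\<^sup>2 * (\<Sum>i\<in>{1..n}. (1 - p i) / p i * (hmv e g J i)\<^sup>2)"
proof -
  let ?A = "matrix_inv J"
  have "trace (Sigmatil n e g J p) = trace (?A ** (?A ** Vtil n e g p))"
    unfolding Sigmatil_def by (rule trace_mul_sym)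
  also have "\<dots> = trace (Vtil n e g p ** (?A ** ?A))"
    by (simp add: matrix_mul_assoc trace_mul_sym[of "?A ** ?A"])
  also have "\<dots> = 4 / (real n)\<^sup>2 * (\<Sum>i\<in>{1..n}. (1 - p i) / p i * (e i)\<^sup>2 * (norm (?A *v g i))\<^sup>2)"
    unfolding Vtil_def trace_scaleR_sum_mult[OF finite_atLeastAtMost] trace_outer_mult
      inner_matrix_inv_square[OF assms] ..
  also have "\<dots> = 4 / (real n)\<^sup>2 * (\<Sum>i\<in>{1..n}. (1 - p i) / p i * (hmv e g J i)\<^sup>2)"
    unfolding hmv_eq_norm[OF assms] by (simp add: power_mult_distrib mult.assoc)
  finally show ?thesis .
qed

section \<open>Capped weights and the threshold\<close>

text \<open>A summand of the Lagrangian for the constraint \<open>\<Sum>i. \<pi>\<^sub>i = r\<close>. For \<open>h = 0\<close> we have \<open>p = 0\<close>,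
  and the left-hand side vanishes because \<open>1 / 0 = 0\<close>.\<close>

lemma capped_weight_minimizes:
  fixes h M x :: real
  assumes h: "h \<ge> 0" and M: "M > 0" and x: "0 < x" "x \<le> 1"
  defines "p \<equiv> min h M / M"
  shows "(1 - p) / p * h\<^sup>2 + M\<^sup>2 * p \<le> (1 - x) / x * h\<^sup>2 + M\<^sup>2 * x"
proof -
  have rhs: "(1 - x) / x * h\<^sup>2 + M\<^sup>2 * x = h\<^sup>2 / x - h\<^sup>2 + M\<^sup>2 * x"
    using x by (simp add: field_simps)
  consider "h = 0" | "0 < h" "h < M" | "M \<le> h" using h by linarith
  then show ?thesis
  proof cases
    case 1
    then show ?thesis unfolding p_def using M x by simp
  next
    case 2
    have "(1 - p) / p * h\<^sup>2 + M\<^sup>2 * p = 2 * M * h - h\<^sup>2"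
      unfolding p_def using 2 by (simp add: field_simps power2_eq_square)
    moreover have "2 * M * h * x \<le> h\<^sup>2 + M\<^sup>2 * x * x"
      using sum_power2_ge_zero[of "h - M * x" 0] by (simp add: power2_eq_square algebra_simps)
    then have "2 * M * h \<le> h\<^sup>2 / x + M\<^sup>2 * x"
      using x by (simp add: field_simps)
    ultimately show ?thesis unfolding rhs by simp
  next
    case 3
    have "M\<^sup>2 * x \<le> M\<^sup>2" using x by (simp add: mult_left_le)
    also have "\<dots> \<le> h\<^sup>2" using 3 M by (simp add: power_mono)
    finally have "M\<^sup>2 \<le> h\<^sup>2 / x" using x by (simp add: le_divide_eq)
    then have "M\<^sup>2 * (1 - x) \<le> h\<^sup>2 / x * (1 - x)" using x by (intro mult_right_mono) auto
    moreover have "h\<^sup>2 / x * (1 - x) = h\<^sup>2 / x - h\<^sup>2" using x by (simp add: field_simps)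
    moreover have "p = 1" unfolding p_def using 3 M by simp
    ultimately show ?thesis unfolding rhs by (simp add: algebra_simps)
  qed
qed

lemma sum_ostat: "(\<Sum>j\<in>{1..n}. f (h j)) = (\<Sum>j\<in>{1..n}. f (ostat h n j))"
proof -
  define xs where "xs = map h [1..<n+1]"
  have "(\<Sum>j\<in>{1..n}. f (h j)) = sum_list (map f xs)"
  proof -
    have "set [1..<n+1] = {1..n}" by auto
    then show ?thesis
      unfolding xs_def map_map by (metis comp_apply distinct_upt sum.cong sum_list_distinct_conv_sum_set)
  qed
  also have "\<dots> = sum_list (map f (sort xs))"
    by (metis mset_map mset_sort sum_mset_sum_list)
  also have "\<dots> = (\<Sum>j<n. f (sort xs ! j))"
  proof -
    have "length (sort xs) = n" by (simp add: xs_def)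
    then show ?thesis by (simp add: sum_list_sum_nth atLeast0LessThan)
  qed
  also have "\<dots> = (\<Sum>j\<in>{1..n}. f (sort xs ! (j - 1)))"
    by (rule sum.reindex_bij_witness[where i="\<lambda>j. j - 1" and j="\<lambda>j. j + 1"]) auto
  finally show ?thesis by (simp add: ostat_def xs_def)
qed

lemma ostat_mono:
  assumes "1 \<le> i" "i \<le> j" "j \<le> n"
  shows "ostat h n i \<le> ostat h n j"
  unfolding ostat_def using assms by (intro sorted_nth_mono) auto

lemma ostat_in_image:
  assumes "1 \<le> j" "j \<le> n"
  shows "ostat h n j \<in> h ` {1..n}"
proof -
  have "ostat h n j \<in> set (sort (map h [1..<n+1]))"
    unfolding ostat_def using assms by (intro nth_mem) auto
  then show ?thesis by auto
qed

context
  fixes h :: "nat \<Rightarrow> real" and n r :: nat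
  assumes h_nonneg: "\<forall>i\<in>{1..n}. h i \<ge> 0"
    and r_bounds: "1 \<le> r" "r \<le> n - 1"
    and pos: "ostat h n (n - r) > 0"
begin

lemma ostat_nonneg: "1 \<le> j \<Longrightarrow> j \<le> n \<Longrightarrow> 0 \<le> ostat h n j"
  using ostat_in_image[of j n h] h_nonneg by auto

lemma kidx_spec:
  defines "k \<equiv> kidx h n r"
  shows "k < r"
    and "real (r - k) * ostat h n (n - k) < (\<Sum>i\<in>{1..n - k}. ostat h n i)"
    and "0 < k \<Longrightarrow> (\<Sum>i\<in>{1..n - k + 1}. ostat h n i) \<le> real (r - k + 1) * ostat h n (n - k + 1)"
proof -
  define P where "P s \<longleftrightarrow> s \<le> r \<and> real (r - s) * ostat h n (n - s) < (\<Sum>i\<in>{1..n - s}. ostat h n i)" for s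
  have k_Least: "k = (LEAST s. P s)" unfolding k_def kidx_def P_def ..
  have "P (r - 1)"
  proof -
    have "ostat h n (n - r) \<le> (\<Sum>i\<in>{1..n - r}. ostat h n i)"
      using r_bounds by (intro member_le_sum) (auto intro: ostat_nonneg)
    moreover have "n - (r - 1) = n - r + 1" "r - (r - 1) = 1" using r_bounds by auto
    ultimately show ?thesis unfolding P_def using pos by simp
  qed
  then have "P k" "k \<le> r - 1" unfolding k_Least by (auto intro: LeastI Least_le)
  then show "k < r" "real (r - k) * ostat h n (n - k) < (\<Sum>i\<in>{1..n - k}. ostat h n i)"
    using r_bounds unfolding P_def by auto
  assume "0 < k"
  then have "\<not> P (k - 1)" unfolding k_Least by (intro not_less_Least) simp
  moreover have "n - (k - 1) = n - k + 1" "r - (k - 1) = r - k + 1"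
    using \<open>0 < k\<close> \<open>k \<le> r - 1\<close> r_bounds by auto
  ultimately show "(\<Sum>i\<in>{1..n - k + 1}. ostat h n i) \<le> real (r - k + 1) * ostat h n (n - k + 1)"
    unfolding P_def using \<open>k \<le> r - 1\<close> by (simp add: not_less algebra_simps)
qed

text \<open>So \<open>min _ M\<close> caps exactly the \<open>k\<close> largest values.\<close>

lemma Mthr_separates:
  defines "k \<equiv> kidx h n r" and "M \<equiv> Mthr h n r"
  shows "0 < M" and "ostat h n (n - k) < M" and "0 < k \<Longrightarrow> M \<le> ostat h n (n - k + 1)"
proof -
  define T where "T = (\<Sum>i\<in>{1..n - k}. ostat h n i)"
  have M_eq: "M = T / real (r - k)" unfolding M_def Mthr_def T_def k_def by simp
  have rk: "real (r - k) > 0" using kidx_spec(1) unfolding k_def by simp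
  have "0 \<le> ostat h n (n - k)"
    using kidx_spec(1) r_bounds unfolding k_def by (intro ostat_nonneg) auto
  then have "0 \<le> real (r - k) * ostat h n (n - k)" by simp
  moreover have "real (r - k) * ostat h n (n - k) < T"
    using kidx_spec(2) unfolding T_def k_def .
  ultimately show "ostat h n (n - k) < M" "0 < M"
    unfolding M_eq using rk
    by (simp_all add: pos_less_divide_eq mult.commute del: of_nat_diff)
  assume "0 < k"
  have "(\<Sum>i\<in>{1..n - k + 1}. ostat h n i) = T + ostat h n (n - k + 1)"
    unfolding T_def by simp
  moreover have "real (r - k + 1) = real (r - k) + 1" by simp
  ultimately have "T \<le> real (r - k) * ostat h n (n - k + 1)"
    using kidx_spec(3)[OF \<open>0 < k\<close>[unfolded k_def]] unfolding k_def by (simp add: distrib_right)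
  then show "M \<le> ostat h n (n - k + 1)"
    unfolding M_eq using rk by (simp add: pos_divide_le_eq mult.commute del: of_nat_diff)
qed

lemma sum_min_Mthr: "(\<Sum>j\<in>{1..n}. min (h j) (Mthr h n r)) = real r * Mthr h n r"
proof -
  define k where "k = kidx h n r"
  define M where "M = Mthr h n r"
  have k: "k < r" "k \<le> n" using kidx_spec(1) r_bounds unfolding k_def by auto
  have split: "{1..n} = {1..n - k} \<union> {n - k + 1..n}" using k by auto
  have low: "min (ostat h n j) M = ostat h n j" if "j \<in> {1..n - k}" for j
  proof -
    have "ostat h n j \<le> ostat h n (n - k)" using that k by (intro ostat_mono) auto
    then show ?thesis using Mthr_separates(2) unfolding k_def M_def by simp
  qed
  have high: "min (ostat h n j) M = M" if "j \<in> {n - k + 1..n}" for j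
  proof -
    have "0 < k" "ostat h n (n - k + 1) \<le> ostat h n j" using that k by (auto intro: ostat_mono)
    then show ?thesis using Mthr_separates(3) unfolding k_def M_def by simp
  qed
  have "(\<Sum>j\<in>{1..n}. min (h j) M) = (\<Sum>j\<in>{1..n}. min (ostat h n j) M)"
    by (rule sum_ostat)
  also have "\<dots> = (\<Sum>j\<in>{1..n - k}. min (ostat h n j) M) + (\<Sum>j\<in>{n - k + 1..n}. min (ostat h n j) M)"
    unfolding split by (rule sum.union_disjoint) auto
  also have "\<dots> = (\<Sum>j\<in>{1..n - k}. ostat h n j) + real k * M"
    using k by (simp add: low high)
  also have "(\<Sum>j\<in>{1..n - k}. ostat h n j) = real (r - k) * M"
    using k unfolding M_def Mthr_def k_def by simp
  finally show ?thesis using k unfolding M_def by (simp add: algebra_simps of_nat_diff)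
qed

lemma pimv_eq: "pimv h n r i = min (h i) (Mthr h n r) / Mthr h n r"
  using sum_min_Mthr Mthr_separates(1) r_bounds by (simp add: pimv_def)

lemma pimv_feasible:
  shows "(\<Sum>i\<in>{1..n}. pimv h n r i) = real r"
    and "i \<in> {1..n} \<Longrightarrow> 0 \<le> pimv h n r i \<and> pimv h n r i \<le> 1"
    and "0 < h i \<Longrightarrow> 0 < pimv h n r i"
proof -
  have M: "0 < Mthr h n r" by (rule Mthr_separates(1))
  show "(\<Sum>i\<in>{1..n}. pimv h n r i) = real r"
    unfolding pimv_eq sum_divide_distrib[symmetric] sum_min_Mthr using M by simp
  show "i \<in> {1..n} \<Longrightarrow> 0 \<le> pimv h n r i \<and> pimv h n r i \<le> 1"
    unfolding pimv_eq using M h_nonneg by simp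
  show "0 < h i \<Longrightarrow> 0 < pimv h n r i"
    unfolding pimv_eq using M by simp
qed

lemma pimv_minimizes:
  assumes \<pi>_sum: "(\<Sum>i\<in>{1..n}. \<pi> i) = real r" and \<pi>_range: "\<forall>i\<in>{1..n}. 0 < \<pi> i \<and> \<pi> i \<le> 1"
  shows "(\<Sum>i\<in>{1..n}. (1 - pimv h n r i) / pimv h n r i * (h i)\<^sup>2)
           \<le> (\<Sum>i\<in>{1..n}. (1 - \<pi> i) / \<pi> i * (h i)\<^sup>2)"
proof -
  let ?p = "pimv h n r" and ?M = "Mthr h n r"
  have "(\<Sum>i\<in>{1..n}. (1 - ?p i) / ?p i * (h i)\<^sup>2)
      = (\<Sum>i\<in>{1..n}. (1 - ?p i) / ?p i * (h i)\<^sup>2 + ?M\<^sup>2 * ?p i) - ?M\<^sup>2 * real r"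
    using pimv_feasible(1) by (simp add: sum.distrib sum_distrib_left[symmetric])
  also have "\<dots> \<le> (\<Sum>i\<in>{1..n}. (1 - \<pi> i) / \<pi> i * (h i)\<^sup>2 + ?M\<^sup>2 * \<pi> i) - ?M\<^sup>2 * real r"
    unfolding pimv_eq using h_nonneg \<pi>_range
    by (intro diff_right_mono sum_mono capped_weight_minimizes Mthr_separates(1)) auto
  also have "\<dots> = (\<Sum>i\<in>{1..n}. (1 - \<pi> i) / \<pi> i * (h i)\<^sup>2)"
    using \<pi>_sum by (simp add: sum.distrib sum_distrib_left[symmetric])
  finally show ?thesis .
qed

end

theorem theorem2:
  fixes n r :: nat
    and x :: "nat \<Rightarrow> real^'d" and \<Omega> :: "(real^'d) set"
    and yp :: "nat \<Rightarrow> real"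
    and ys :: "real^'d \<Rightarrow> real^'q \<Rightarrow> real"
    and \<Theta> :: "(real^'q) set" and thetahat :: "real^'q"
    and g :: "nat \<Rightarrow> real^'q"
    and S :: "(real^'q) set" and Gr :: "real^'q \<Rightarrow> real^'q"
    and J :: "real^'q^'q"
  assumes x_in: "\<forall>i\<in>{1..n}. x i \<in> \<Omega>"
    and argmin: "thetahat \<in> \<Theta> \<and> (\<forall>\<theta>\<in>\<Theta>.
        (1 / real n) * (\<Sum>i\<in>{1..n}. (yp i - ys (x i) thetahat)^2)
          \<le> (1 / real n) * (\<Sum>i\<in>{1..n}. (yp i - ys (x i) \<theta>)^2))"
    and grad: "\<forall>i\<in>{1..n}. (ys (x i) has_derivative (\<lambda>v. g i \<bullet> v)) (at thetahat)"
    and S_open: "open S" and theta_S: "thetahat \<in> S"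
    and loss_grad: "\<forall>\<theta>\<in>S. ((\<lambda>\<theta>'. (1 / real n) * (\<Sum>i\<in>{1..n}. (yp i - ys (x i) \<theta>')^2))
                        has_derivative (\<lambda>v. Gr \<theta> \<bullet> v)) (at \<theta>)"
    and hessian: "(Gr has_derivative (\<lambda>v. J *v v)) (at thetahat)"
    and J_inv: "invertible J"
    and r_range: "1 \<le> r \<and> r \<le> n - 1"
    and pos: "ostat (hmv (\<lambda>i. yp i - ys (x i) thetahat) g J) n (n - r) > 0"
  shows "let e = (\<lambda>i. yp i - ys (x i) thetahat);
             h = hmv e g J;
             p = pimv h n r
         in (\<Sum>i\<in>{1..n}. p i) = real r \<and> (\<forall>i\<in>{1..n}. 0 \<le> p i \<and> p i \<le> 1) \<and>
            (\<forall>i\<in>{1..n}. h i > 0 \<longrightarrow> 0 < p i) \<and>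
            (\<forall>\<pi>. (\<Sum>i\<in>{1..n}. \<pi> i) = real r \<and> (\<forall>i\<in>{1..n}. 0 < \<pi> i \<and> \<pi> i \<le> 1)
               \<longrightarrow> trace (Sigmatil n e g J p) \<le> trace (Sigmatil n e g J \<pi>))"
proof -
  define e where "e = (\<lambda>i. yp i - ys (x i) thetahat)"
  define h where "h = hmv e g J"
  have J_sym: "(J *v v) \<bullet> u = (J *v u) \<bullet> v" for u v
    by (rule derivative_of_gradient_symmetric[OF S_open theta_S loss_grad hessian])
  have h_nonneg: "\<forall>i\<in>{1..n}. h i \<ge> 0"
    unfolding h_def hmv_eq_norm[OF J_inv J_sym] by simp
  have r_bounds: "1 \<le> r" "r \<le> n - 1" and pos_h: "ostat h n (n - r) > 0"
    using r_range pos unfolding h_def e_def by auto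
  note feasible = pimv_feasible[OF h_nonneg r_bounds pos_h]
  have "trace (Sigmatil n e g J (pimv h n r)) \<le> trace (Sigmatil n e g J \<pi>)"
    if "(\<Sum>i\<in>{1..n}. \<pi> i) = real r" "\<forall>i\<in>{1..n}. 0 < \<pi> i \<and> \<pi> i \<le> 1" for \<pi>
    unfolding trace_Sigmatil[OF J_inv J_sym] h_def[symmetric]
    using pimv_minimizes[OF h_nonneg r_bounds pos_h that] by (intro mult_left_mono) auto
  then show ?thesis
    unfolding Let_def e_def[symmetric] h_def[symmetric] using feasible by blast
qed

end
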